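(* Let $(M,g)$ be a smooth $2$-dimensional Riemannian manifold with Gaussian curvature $K$. For a point $x\in M$ and a unit vector $\xi\in S_xM$, let $\gamma=\gamma_{x,\xi}$ be the unit-speed geodesic with $\gamma(0)=x$, $\dot\gamma(0)=\xi$, and write $K_\gamma(t)=K(\gamma_{x,\xi}(t))$. Define $a=a(x,\xi,t)$ and $b=b(x,\xi,t)$ as the solutions of the scalar Jacobi equations \[ a''+K_\gamma a=0,\quad a(x,\xi,0)=1,\ a'(x,\xi,0)=0,\qquad b''+K_\gamma b=0,\quad b(x,\xi,0)=0,\ b'(x,\xi,0)=1, \] where primes denote derivatives with respect to $t$. Let $\varphi=b\,\partial_\theta a-a\,\partial_\theta b$. Then $\varphi$ satisfies the ordinary differential equation \[ \varphi^{(3)}+4K_\gamma\varphi'+2K_\gamma'\varphi=-2\,\partial_\theta K_\gamma, \] with initial conditions $\varphi(0)=\varphi'(0)=\varphi''(0)=0$.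
   Context: For a unit vector $\xi\in S_xM$, $\xi_\perp$ denotes the unit vector in $T_xM$ obtained by rotating $\xi$ by $+\pi/2$ (so $\{\xi,\xi_\perp\}$ is a positively oriented orthonormal basis). For a smooth function $u(x,\xi,t)$ (with $(x,\xi)$ in the unit sphere bundle $SM$ and $t$ in the interval of definition of $\gamma_{x,\xi}$), the derivative $\partial_\theta$ is the derivative with respect to rotation of the initial direction: $\partial_\theta u(x,\xi,t)=\frac{d}{ds}\big|_{s=0}u(x,\xi(s),t)$, where $\xi(s)$ is a smooth curve in $S_xM$ with $\xi(0)=\xi$ and $\xi'(0)=\xi_\perp$. In particular $\partial_\theta K_\gamma(t)=\frac{d}{ds}\big|_{s=0}K(\gamma_{x,\xi(s)}(t))$. The functions $a,b$ (and hence $\varphi$) are considered as functions of $(x,\xi,t)$, and derivatives $'$ are with respect to $t$. *)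

theory Defs
  imports "HOL-Analysis.Analysis"
begin

text \<open>Functions of (s,t): s = rotation angle of the initial direction
  (xi(s) = cos s xi + sin s xi_perp), t = geodesic time.\<close>

definition dt :: "(real \<times> real \<Rightarrow> real) \<Rightarrow> real \<times> real \<Rightarrow> real" where
  "dt f = (\<lambda>(s,t). deriv (\<lambda>u. f (s,u)) t)"

definition dth :: "(real \<times> real \<Rightarrow> real) \<Rightarrow> real \<times> real \<Rightarrow> real" where
  "dth f = (\<lambda>(s,t). deriv (\<lambda>u. f (u,t)) s)"

definition dpart :: "bool list \<Rightarrow> (real \<times> real \<Rightarrow> real) \<Rightarrow> real \<times> real \<Rightarrow> real" where
  "dpart ds f = foldr (\<lambda>b h. if b then dth h else dt h) ds f"

definition smooth2_on :: "(real \<times> real) set \<Rightarrow> (real \<times> real \<Rightarrow> real) \<Rightarrow> bool" where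
  "smooth2_on U f \<longleftrightarrow> open U \<and>
     (\<forall>ds. continuous_on U (dpart ds f) \<and>
        (\<forall>s t. (s,t) \<in> U \<longrightarrow>
           (\<lambda>u. dpart ds f (u,t)) differentiable (at s) \<and>
           (\<lambda>u. dpart ds f (s,u)) differentiable (at t)))"

end

theory Submission
  imports Defs
begin

text \<open>
  Write \<open>L = \<partial>\<^sub>t\<^sup>2 + K\<close>, \<open>A = \<partial>\<^sub>\<theta>a\<close>, \<open>B = \<partial>\<^sub>\<theta>b\<close>. Differentiating
  \<open>L a = L b = 0\<close> in \<open>\<theta>\<close> (which needs the symmetry of mixed partials, proved from the
  fundamental theorem of calculus and differentiation under the integral sign) gives
  \<open>L A = -(\<partial>\<^sub>\<theta>K) a\<close> and \<open>L B = -(\<partial>\<^sub>\<theta>K) b\<close>. With \<open>\<psi> = b' A' - a' B'\<close> one then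
  computes \<open>\<phi>'' = -2K\<phi> + 2\<psi>\<close> and \<open>\<psi>' = -K\<phi>' - (\<partial>\<^sub>\<theta>K) W\<close>, where
  \<open>W = a b' - a' b\<close> is the Wronskian, which is constant along geodesics and equals 1.
  Differentiating \<open>\<phi>''\<close> once more yields the equation. The initial values vanish because
  the initial data of \<open>a\<close> and \<open>b\<close> do not depend on \<open>\<theta>\<close>, so \<open>A\<close>, \<open>B\<close>, \<open>A'\<close>, \<open>B'\<close>
  vanish at \<open>t = 0\<close>.
\<close>

lemma dpart_simps [simp]:
  "dpart [] f = f" "dpart (False # ds) f = dt (dpart ds f)" "dpart (True # ds) f = dth (dpart ds f)"
  by (simp_all add: dpart_def)

lemma smooth2_on_open: "smooth2_on U f \<Longrightarrow> open U"
  by (simp add: smooth2_on_def)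

lemma smooth2_on_continuous_on: "smooth2_on U f \<Longrightarrow> continuous_on U f"
  using smooth2_on_def[of U f] by (metis dpart_simps(1))

lemma smooth2_on_dpart:
  assumes "smooth2_on U f"
  shows "smooth2_on U (dpart ds f)"
proof -
  have "dpart ds' (dpart ds f) = dpart (ds' @ ds) f" for ds'
    by (simp add: dpart_def)
  then show ?thesis using assms unfolding smooth2_on_def by presburger
qed

lemma smooth2_on_dt: "smooth2_on U f \<Longrightarrow> smooth2_on U (dt f)"
  using smooth2_on_dpart[of U f "[False]"] by simp

lemma smooth2_on_dth: "smooth2_on U f \<Longrightarrow> smooth2_on U (dth f)"
  using smooth2_on_dpart[of U f "[True]"] by simp

lemma dt_eqI: "((\<lambda>u. f (s, u)) has_real_derivative D) (at t) \<Longrightarrow> dt f (s, t) = D"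
  by (simp add: dt_def DERIV_imp_deriv)

lemma dth_eqI: "((\<lambda>u. f (u, t)) has_real_derivative D) (at s) \<Longrightarrow> dth f (s, t) = D"
  by (simp add: dth_def DERIV_imp_deriv)

lemma has_real_derivative_dt:
  "(\<lambda>u. f (s, u)) differentiable (at t) \<Longrightarrow> ((\<lambda>u. f (s, u)) has_real_derivative dt f (s, t)) (at t)"
  by (simp add: dt_def DERIV_deriv_iff_real_differentiable)

lemma smooth2_on_has_derivative_dt:
  "smooth2_on U f \<Longrightarrow> (s, t) \<in> U \<Longrightarrow> ((\<lambda>u. f (s, u)) has_real_derivative dt f (s, t)) (at t)"
  by (rule has_real_derivative_dt) (use smooth2_on_def[of U f] in \<open>metis dpart_simps(1)\<close>)

lemma smooth2_on_has_derivative_dth: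
  "smooth2_on U f \<Longrightarrow> (s, t) \<in> U \<Longrightarrow> ((\<lambda>u. f (u, t)) has_real_derivative dth f (s, t)) (at s)"
  unfolding dth_def case_prod_conv DERIV_deriv_iff_real_differentiable
  using smooth2_on_def[of U f] by (metis dpart_simps(1))

lemma dt_cong_open:
  assumes "open U" "(s, t) \<in> U" "\<And>z. z \<in> U \<Longrightarrow> f z = g z"
  shows "dt f (s, t) = dt g (s, t)"
proof -
  have "open ((\<lambda>u. (s, u)) -` U)"
    using assms(1) by (intro continuous_open_vimage continuous_intros)
  then have "eventually (\<lambda>u. (s, u) \<in> U) (nhds t)"
    using assms(2) eventually_nhds_in_open by fastforce
  then have "eventually (\<lambda>u. f (s, u) = g (s, u)) (nhds t)"
    by eventually_elim (use assms(3) in auto)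
  then show ?thesis by (simp add: dt_def deriv_cong_ev)
qed

lemma dth_cong_open:
  assumes "open U" "(s, t) \<in> U" "\<And>z. z \<in> U \<Longrightarrow> f z = g z"
  shows "dth f (s, t) = dth g (s, t)"
proof -
  have "open ((\<lambda>u. (u, t)) -` U)"
    using assms(1) by (intro continuous_open_vimage continuous_intros)
  then have "eventually (\<lambda>u. (u, t) \<in> U) (nhds s)"
    using assms(2) eventually_nhds_in_open by fastforce
  then have "eventually (\<lambda>u. f (u, t) = g (u, t)) (nhds s)"
    by eventually_elim (use assms(3) in auto)
  then show ?thesis by (simp add: dth_def deriv_cong_ev)
qed

lemma open_contains_square:
  fixes s0 t0 :: real
  assumes "open U" "(s0, t0) \<in> U"
  obtains d where "d > 0" "{s0-d..s0+d} \<times> {t0-d..t0+d} \<subseteq> U"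
proof -
  obtain e where e: "e > 0" "cball (s0, t0) e \<subseteq> U"
    using assms open_contains_cball by blast
  have "{s0-e/2..s0+e/2} \<times> {t0-e/2..t0+e/2} \<subseteq> cball (s0, t0) e"
  proof clarify
    fix s t assume "s \<in> {s0-e/2..s0+e/2}" "t \<in> {t0-e/2..t0+e/2}"
    then have "\<bar>s0 - s\<bar> + \<bar>t0 - t\<bar> \<le> e" by auto
    then show "(s, t) \<in> cball (s0, t0) e"
      using sqrt_sum_squares_le_sum_abs[of "s0 - s" "t0 - t"]
      by (simp add: dist_Pair_Pair dist_real_def)
  qed
  then show ?thesis using e that[of "e/2"] by auto
qed

lemma continuous_on_Pair_slice:
  "continuous_on U f \<Longrightarrow> {x} \<times> T \<subseteq> U \<Longrightarrow> continuous_on T (\<lambda>\<tau>. f (x, \<tau>))"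
  by (rule continuous_on_compose2[of U f]) (auto intro!: continuous_intros)

lemma smooth2_on_integral_dt:
  assumes f: "smooth2_on U f" and "c \<le> t" "{x} \<times> {c..t} \<subseteq> U"
  shows "f (x, t) = f (x, c) + integral {c..t} (\<lambda>\<tau>. dt f (x, \<tau>))"
proof -
  have "((\<lambda>\<tau>. dt f (x, \<tau>)) has_integral f (x, t) - f (x, c)) {c..t}"
  proof (rule fundamental_theorem_of_calculus)
    fix \<tau> assume "\<tau> \<in> {c..t}"
    with assms have "(x, \<tau>) \<in> U" by auto
    then have "((\<lambda>u. f (x, u)) has_real_derivative dt f (x, \<tau>)) (at \<tau>)"
      by (rule smooth2_on_has_derivative_dt[OF f])
    then show "((\<lambda>u. f (x, u)) has_vector_derivative dt f (x, \<tau>)) (at \<tau> within {c..t})"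
      by (simp add: has_real_derivative_iff_has_vector_derivative has_vector_derivative_at_within)
  qed (use assms in simp)
  then show ?thesis by (simp add: integral_unique)
qed

lemma smooth2_on_has_derivative_integral_dt:
  assumes f: "smooth2_on U f" and "d > 0" and R: "{s0-d..s0+d} \<times> {c..t} \<subseteq> U"
  shows "((\<lambda>x. integral {c..t} (\<lambda>\<tau>. dt f (x, \<tau>))) has_real_derivative
           integral {c..t} (\<lambda>\<tau>. dth (dt f) (s0, \<tau>))) (at s0)"
proof -
  let ?S = "{s0-d..s0+d}"
  have deriv: "((\<lambda>x. dt f (x, \<tau>)) has_real_derivative dth (dt f) (x, \<tau>)) (at x within ?S)"
    if "x \<in> ?S" "\<tau> \<in> cbox c t" for x \<tau>
  proof -
    have "(x, \<tau>) \<in> U" using that R by (auto simp: box_real)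
    then show ?thesis
      by (rule has_field_derivative_at_within[OF smooth2_on_has_derivative_dth[OF smooth2_on_dt[OF f]]])
  qed
  have integrable: "(\<lambda>\<tau>. dt f (x, \<tau>)) integrable_on cbox c t" if "x \<in> ?S" for x
  proof (rule integrable_continuous)
    have "{x} \<times> cbox c t \<subseteq> U" using that R by (auto simp: box_real)
    then show "continuous_on (cbox c t) (\<lambda>\<tau>. dt f (x, \<tau>))"
      by (rule continuous_on_Pair_slice[OF smooth2_on_continuous_on[OF smooth2_on_dt[OF f]]])
  qed
  have cont: "continuous_on (?S \<times> cbox c t) (\<lambda>(x, \<tau>). dth (dt f) (x, \<tau>))"
    unfolding case_prod_eta box_real
    by (rule continuous_on_subset[OF smooth2_on_continuous_on[OF smooth2_on_dth[OF smooth2_on_dt[OF f]]] R])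
  have "s0 \<in> ?S" "convex ?S" using \<open>d > 0\<close> by auto
  from leibniz_rule_field_derivative[OF deriv integrable cont this]
  have "((\<lambda>x. integral {c..t} (\<lambda>\<tau>. dt f (x, \<tau>))) has_real_derivative
           integral {c..t} (\<lambda>\<tau>. dth (dt f) (s0, \<tau>))) (at s0 within ?S)"
    by (simp add: box_real)
  moreover have "s0 \<in> interior ?S" using \<open>d > 0\<close> by simp
  ultimately show ?thesis by (metis at_within_interior)
qed

lemma smooth2_on_dth_eq_integral:
  assumes f: "smooth2_on U f" and "d > 0" "c \<le> t" and R: "{s0-d..s0+d} \<times> {c..t} \<subseteq> U"
  shows "dth f (s0, t) = dth f (s0, c) + integral {c..t} (\<lambda>\<tau>. dth (dt f) (s0, \<tau>))"
proof (rule dth_eqI)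
  have "(s0, c) \<in> U" using R \<open>d > 0\<close> \<open>c \<le> t\<close> by auto
  then have "((\<lambda>x. f (x, c) + integral {c..t} (\<lambda>\<tau>. dt f (x, \<tau>))) has_real_derivative
             dth f (s0, c) + integral {c..t} (\<lambda>\<tau>. dth (dt f) (s0, \<tau>))) (at s0)"
    by (intro DERIV_add smooth2_on_has_derivative_dth[OF f]
          smooth2_on_has_derivative_integral_dt[OF f \<open>d > 0\<close> R])
  then show "((\<lambda>x. f (x, t)) has_real_derivative
             dth f (s0, c) + integral {c..t} (\<lambda>\<tau>. dth (dt f) (s0, \<tau>))) (at s0)"
    by (rule has_field_derivative_transform_within_open[of _ _ _ "{s0-d<..<s0+d}"])
       (use assms in \<open>auto intro!: smooth2_on_integral_dt[symmetric]\<close>)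
qed

theorem smooth2_on_dt_dth_commute:
  assumes f: "smooth2_on U f" and "z \<in> U"
  shows "dt (dth f) z = dth (dt f) z"
proof -
  obtain s0 t0 where z: "z = (s0, t0)" by fastforce
  obtain d where d: "d > 0" "{s0-d..s0+d} \<times> {t0-d..t0+d} \<subseteq> U"
    using open_contains_square[OF smooth2_on_open[OF f], of s0 t0] assms z by blast
  define c where "c = t0 - d"
  have "continuous_on {c..t0+d} (\<lambda>\<tau>. dth (dt f) (s0, \<tau>))"
    using d smooth2_on_continuous_on[OF smooth2_on_dth[OF smooth2_on_dt[OF f]]]
    by (intro continuous_on_Pair_slice[of U]) (auto simp: c_def)
  then have "((\<lambda>t. integral {c..t} (\<lambda>\<tau>. dth (dt f) (s0, \<tau>))) has_real_derivative
              dth (dt f) (s0, t0)) (at t0)"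
    using integral_has_real_derivative[of c "t0+d" _ t0] d
    by (simp add: c_def at_within_Icc_at)
  then have "((\<lambda>t. dth f (s0, c) + integral {c..t} (\<lambda>\<tau>. dth (dt f) (s0, \<tau>))) has_real_derivative
              dth (dt f) (s0, t0)) (at t0)"
    using DERIV_add[OF DERIV_const[of "dth f (s0, c)"]] by simp
  then have "((\<lambda>t. dth f (s0, t)) has_real_derivative dth (dt f) (s0, t0)) (at t0)"
  proof (rule has_field_derivative_transform_within_open[of _ _ _ "{c<..<t0+d}"])
    fix t assume "t \<in> {c<..<t0+d}"
    with d show "dth f (s0, c) + integral {c..t} (\<lambda>\<tau>. dth (dt f) (s0, \<tau>)) = dth f (s0, t)"
      by (intro smooth2_on_dth_eq_integral[OF f, of d, symmetric]) (auto simp: c_def)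
  qed (use d in \<open>auto simp: c_def\<close>)
  then show ?thesis using z by (simp add: dt_eqI)
qed

lemma jacobi_dth:
  assumes f: "smooth2_on U f" and k: "smooth2_on U k"
    and jacobi: "\<And>z. z \<in> U \<Longrightarrow> dt (dt f) z + k z * f z = 0" and "z \<in> U"
  shows "dt (dt (dth f)) z + k z * dth f z = - dth k z * f z"
proof -
  obtain s t where z: "z = (s, t)" by fastforce
  have U: "open U" "(s, t) \<in> U" using smooth2_on_open[OF f] assms z by auto
  have "dt (dt (dth f)) (s, t) = dt (dth (dt f)) (s, t)"
    by (rule dt_cong_open[OF U]) (rule smooth2_on_dt_dth_commute[OF f])
  also have "\<dots> = dth (dt (dt f)) (s, t)"
    by (rule smooth2_on_dt_dth_commute[OF smooth2_on_dt[OF f] U(2)])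
  also have "\<dots> = dth (\<lambda>z. - k z * f z) (s, t)"
    by (rule dth_cong_open[OF U]) (use jacobi in \<open>simp add: eq_neg_iff_add_eq_0\<close>)
  also have "\<dots> = - (dth k (s, t) * f (s, t) + k (s, t) * dth f (s, t))"
    by (rule dth_eqI)
       (auto intro!: derivative_eq_intros smooth2_on_has_derivative_dth[OF k U(2)]
                     smooth2_on_has_derivative_dth[OF f U(2)])
  finally show ?thesis using z by simp
qed

definition wronskian :: "(real \<times> real \<Rightarrow> real) \<Rightarrow> (real \<times> real \<Rightarrow> real) \<Rightarrow> real \<times> real \<Rightarrow> real"
  where "wronskian a b z = a z * dt b z - dt a z * b z"

locale jacobi_pair =
  fixes U :: "(real \<times> real) set" and k a b :: "real \<times> real \<Rightarrow> real"
  assumes k_smooth: "smooth2_on U k"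
    and a_smooth: "smooth2_on U a"
    and b_smooth: "smooth2_on U b"
    and a_jacobi: "\<And>z. z \<in> U \<Longrightarrow> dt (dt a) z + k z * a z = 0"
    and b_jacobi: "\<And>z. z \<in> U \<Longrightarrow> dt (dt b) z + k z * b z = 0"
begin

definition phi :: "real \<times> real \<Rightarrow> real"
  where "phi z = b z * dth a z - a z * dth b z"

definition psi :: "real \<times> real \<Rightarrow> real"
  where "psi z = dt b z * dt (dth a) z - dt a z * dt (dth b) z"

lemma open_U: "open U"
  using smooth2_on_open[OF k_smooth] .

lemmas smooth_components =
  a_smooth b_smooth k_smooth smooth2_on_dt[OF a_smooth] smooth2_on_dt[OF b_smooth]
  smooth2_on_dth[OF a_smooth] smooth2_on_dth[OF b_smooth]
  smooth2_on_dt[OF smooth2_on_dth[OF a_smooth]] smooth2_on_dt[OF smooth2_on_dth[OF b_smooth]]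

lemmas has_derivative_slices = smooth_components[THEN smooth2_on_has_derivative_dt]

lemma jacobi_eqs:
  assumes "z \<in> U"
  shows "dt (dt a) z = - k z * a z" "dt (dt b) z = - k z * b z"
    "dt (dt (dth a)) z = - k z * dth a z - dth k z * a z"
    "dt (dt (dth b)) z = - k z * dth b z - dth k z * b z"
  using a_jacobi[OF assms] b_jacobi[OF assms]
    jacobi_dth[OF a_smooth k_smooth a_jacobi assms] jacobi_dth[OF b_smooth k_smooth b_jacobi assms]
  by (simp_all add: eq_neg_iff_add_eq_0 algebra_simps)

lemma wronskian_eq:
  assumes "is_interval {t. (s, t) \<in> U}" "(s, t) \<in> U" "(s, t0) \<in> U"
  shows "wronskian a b (s, t) = wronskian a b (s, t0)"
proof -
  let ?I = "{t. (s, t) \<in> U}"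
  have "\<exists>c. \<forall>t\<in>?I. wronskian a b (s, t) = c"
  proof (rule has_field_derivative_zero_constant)
    show "convex ?I" using assms(1) by (rule is_interval_convex_1[THEN iffD1])
    fix t assume "t \<in> ?I"
    then have st: "(s, t) \<in> U" by simp
    have "((\<lambda>u. wronskian a b (s, u)) has_real_derivative 0) (at t)"
      unfolding wronskian_def
      by (rule derivative_eq_intros has_derivative_slices[OF st] refl)+
         (simp add: jacobi_eqs[OF st] algebra_simps)
    then show "((\<lambda>u. wronskian a b (s, u)) has_real_derivative 0) (at t within ?I)"
      by (rule has_field_derivative_at_within)
  qed
  then show ?thesis using assms by auto
qed

lemma phi_has_derivative:
  assumes "(s, t) \<in> U"
  shows "((\<lambda>u. phi (s, u)) has_real_derivative
          b (s, t) * dt (dth a) (s, t) - a (s, t) * dt (dth b) (s, t)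
          + dt b (s, t) * dth a (s, t) - dt a (s, t) * dth b (s, t)) (at t)"
  unfolding phi_def using assms by (auto intro!: derivative_eq_intros has_derivative_slices)

lemma dt_phi:
  assumes "z \<in> U"
  shows "dt phi z = b z * dt (dth a) z - a z * dt (dth b) z + dt b z * dth a z - dt a z * dth b z"
proof -
  obtain s t where z: "z = (s, t)" by fastforce
  show ?thesis using assms phi_has_derivative[of s t] z by (simp add: dt_eqI)
qed

lemma dt_dt_phi:
  assumes "z \<in> U"
  shows "dt (dt phi) z = - 2 * k z * phi z + 2 * psi z"
proof -
  obtain s t where z: "z = (s, t)" by fastforce
  have st: "(s, t) \<in> U" using assms z by simp
  have "dt (dt phi) (s, t) = dt (\<lambda>z. b z * dt (dth a) z - a z * dt (dth b) z
                                   + dt b z * dth a z - dt a z * dth b z) (s, t)"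
    by (rule dt_cong_open[OF open_U st]) (rule dt_phi)
  also have "\<dots> = - 2 * k (s, t) * phi (s, t) + 2 * psi (s, t)"
    by (rule dt_eqI)
       (use st in \<open>auto intro!: derivative_eq_intros has_derivative_slices
                       simp: phi_def psi_def jacobi_eqs algebra_simps\<close>)
  finally show ?thesis using z by simp
qed

lemma psi_has_derivative:
  assumes "(s, t) \<in> U"
  shows "((\<lambda>u. psi (s, u)) has_real_derivative
          - k (s, t) * dt phi (s, t) - dth k (s, t) * wronskian a b (s, t)) (at t)"
  unfolding psi_def using assms
  by (auto intro!: derivative_eq_intros has_derivative_slices
           simp: dt_phi jacobi_eqs wronskian_def algebra_simps)

lemma phi_ode:
  assumes "z \<in> U"
  shows "dt (dt (dt phi)) z + 4 * k z * dt phi z + 2 * dt k z * phi z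
           = - 2 * dth k z * wronskian a b z"
proof -
  obtain s t where z: "z = (s, t)" by fastforce
  have st: "(s, t) \<in> U" using assms z by simp
  have "dt (dt (dt phi)) (s, t) = dt (\<lambda>z. - 2 * k z * phi z + 2 * psi z) (s, t)"
    by (rule dt_cong_open[OF open_U st]) (rule dt_dt_phi)
  also have "\<dots> = - 2 * (dt k (s, t) * phi (s, t) + k (s, t) * dt phi (s, t))
                  + 2 * (- k (s, t) * dt phi (s, t) - dth k (s, t) * wronskian a b (s, t))"
    by (rule dt_eqI)
       (use st in \<open>auto intro!: derivative_eq_intros has_derivative_slices psi_has_derivative
                       phi_has_derivative simp: dt_phi algebra_simps\<close>)
  finally show ?thesis using z by (simp add: algebra_simps)
qed

lemma phi_initial:
  assumes "(s, t0) \<in> U"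
    and "dth a (s, t0) = 0" "dth b (s, t0) = 0" "dth (dt a) (s, t0) = 0" "dth (dt b) (s, t0) = 0"
  shows "phi (s, t0) = 0" "dt phi (s, t0) = 0" "dt (dt phi) (s, t0) = 0"
  using assms smooth2_on_dt_dth_commute[OF a_smooth assms(1)]
    smooth2_on_dt_dth_commute[OF b_smooth assms(1)]
  by (simp_all add: phi_def psi_def dt_phi dt_dt_phi)

end

theorem lemma2p1:
  fixes U :: "(real \<times> real) set"
    and k a b :: "real \<times> real \<Rightarrow> real"
  assumes U_open: "open U"
    and U_zero: "\<And>s. (s, 0) \<in> U"
    and U_slices: "\<And>s. is_interval {t. (s, t) \<in> U}"
    and k_smooth: "smooth2_on U k"
    and a_smooth: "smooth2_on U a"
    and b_smooth: "smooth2_on U b"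
    and a_jacobi: "\<And>z. z \<in> U \<Longrightarrow> dt (dt a) z + k z * a z = 0"
    and b_jacobi: "\<And>z. z \<in> U \<Longrightarrow> dt (dt b) z + k z * b z = 0"
    and a_init: "\<And>s. a (s, 0) = 1 \<and> dt a (s, 0) = 0"
    and b_init: "\<And>s. b (s, 0) = 0 \<and> dt b (s, 0) = 1"
  defines "\<phi> \<equiv> (\<lambda>z. b z * dth a z - a z * dth b z)"
  shows "(\<forall>z\<in>U. dt (dt (dt \<phi>)) z + 4 * k z * dt \<phi> z + 2 * dt k z * \<phi> z
                  = - 2 * dth k z)
         \<and> (\<forall>s. \<phi> (s, 0) = 0 \<and> dt \<phi> (s, 0) = 0 \<and> dt (dt \<phi>) (s, 0) = 0)"
proof -
  \<comment> \<open>\<open>U_open\<close> is redundant: openness is part of \<open>smooth2_on\<close>.\<close>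
  interpret jacobi_pair U k a b
    using k_smooth a_smooth b_smooth a_jacobi b_jacobi by unfold_locales
  have \<phi>: "\<phi> = phi" by (simp add: \<phi>_def phi_def fun_eq_iff)
  have "wronskian a b z = 1" if "z \<in> U" for z
  proof -
    obtain s t where z: "z = (s, t)" by fastforce
    with that have "wronskian a b z = wronskian a b (s, 0)"
      using wronskian_eq[OF U_slices _ U_zero] by simp
    also have "\<dots> = 1" using a_init b_init by (simp add: wronskian_def)
    finally show ?thesis .
  qed
  moreover have "dth a (s, 0) = 0" "dth b (s, 0) = 0" "dth (dt a) (s, 0) = 0" "dth (dt b) (s, 0) = 0"
    for s using a_init b_init by (simp_all add: dth_def)
  ultimately show ?thesis using phi_ode phi_initial U_zero by (simp add: \<phi>)
qed

end
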